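(* Let $M=(S,\mathrm{Act},P)$ be an MDP, $T\subseteq S$, $\mathrm{rew}\colon S\to\mathbb{R}_{\ge0}$. Let $(x,r)\in[0,\infty]^S\times\mathbb{N}_\infty^S$ satisfy: (1) $D^{\max}(r)\le r$; (2) $E^{\max}(x)\le x$; (3) for all $s\in S$, $x(s)<\infty$ implies $r(s)<\infty$ (inequalities pointwise). Then $\mathbb{E}^{\max}_s(\Diamond T)\le x(s)$ for all $s\in S$.
   Context: An MDP is a tuple $M=(S,\mathrm{Act},P)$ with $S$ finite, $\mathrm{Act}$ finite, $P\colon S\times\mathrm{Act}\times S\to[0,1]$ with $\sum_{s'}P(s,a,s')\in\{0,1\}$; $\mathrm{Act}(s)=\{a\mid\sum_{s'}P(s,a,s')=1\}$ is nonempty for all $s$; $\mathrm{Post}(s,a)=\{s'\mid P(s,a,s')>0\}$. A strategy is $\sigma\colon S\to\mathrm{Act}$ with $\sigma(s)\in\mathrm{Act}(s)$, inducing a Markov chain with transitions $P(s,\sigma(s),\cdot)$. For an infinite path $s_0s_1\ldots$, the accumulated reward is $\sum_{k=0}^{n-1}\mathrm{rew}(s_k)$ with $n=\min\{i\mid s_i\in T\}$ if $T$ is visited, and $\infty$ otherwise; $\mathbb{E}^\sigma_s(\Diamond T)$ is its expectation under $\sigma$ from $s$, and $\mathbb{E}^{\max}_s(\Diamond T)=\max_\sigma\mathbb{E}^\sigma_s(\Diamond T)$. $E^{\max}(x)(s)=0$ for $s\in T$ and $\mathrm{rew}(s)+\max_{a\in\mathrm{Act}(s)}\sum_{s'\in\mathrm{Post}(s,a)}P(s,a,s')x(s')$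 for $s\notin T$, with $p\cdot\infty=\infty$ for $p>0$, $a+\infty=\infty$. $\mathbb{N}_\infty=\mathbb{N}\cup\{\infty\}$, $1+\infty=\infty$; $D^{\max}(r)(s)=0$ for $s\in T$ and $1+\max_{a\in\mathrm{Act}(s)}\min_{s'\in\mathrm{Post}(s,a)}r(s')$ for $s\notin T$. *)

theory Defs
  imports Main "HOL-Library.Extended_Nonnegative_Real" "HOL-Library.Extended_Nat"
begin

definition Act :: "('S::finite \<Rightarrow> 'A::finite \<Rightarrow> 'S \<Rightarrow> real) \<Rightarrow> 'S \<Rightarrow> 'A set" where
  "Act P s = {a. (\<Sum>s'\<in>UNIV. P s a s') = 1}"

definition Post :: "('S::finite \<Rightarrow> 'A::finite \<Rightarrow> 'S \<Rightarrow> real) \<Rightarrow> 'S \<Rightarrow> 'A \<Rightarrow> 'S set" where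
  "Post P s a = {s'. P s a s' > 0}"

definition is_mdp :: "('S::finite \<Rightarrow> 'A::finite \<Rightarrow> 'S \<Rightarrow> real) \<Rightarrow> bool" where
  "is_mdp P \<longleftrightarrow>
     (\<forall>s a s'. 0 \<le> P s a s' \<and> P s a s' \<le> 1) \<and>
     (\<forall>s a. (\<Sum>s'\<in>UNIV. P s a s') \<in> {0, 1}) \<and>
     (\<forall>s. Act P s \<noteq> {})"

definition is_strategy :: "('S::finite \<Rightarrow> 'A::finite \<Rightarrow> 'S \<Rightarrow> real) \<Rightarrow> ('S \<Rightarrow> 'A) \<Rightarrow> bool" where
  "is_strategy P \<sigma> \<longleftrightarrow> (\<forall>s. \<sigma> s \<in> Act P s)"

fun path_prob :: "('S::finite \<Rightarrow> 'A::finite \<Rightarrow> 'S \<Rightarrow> real) \<Rightarrow> ('S \<Rightarrow> 'A) \<Rightarrow> 'S list \<Rightarrow> real" where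
  "path_prob P \<sigma> [] = 1"
| "path_prob P \<sigma> [s] = 1"
| "path_prob P \<sigma> (s # s' # \<pi>) = P s (\<sigma> s) s' * path_prob P \<sigma> (s' # \<pi>)"

definition first_hit_paths :: "'S set \<Rightarrow> 'S \<Rightarrow> nat \<Rightarrow> 'S list set" where
  "first_hit_paths T s n =
     {\<pi>. length \<pi> = Suc n \<and> \<pi> ! 0 = s \<and> \<pi> ! n \<in> T \<and> (\<forall>i<n. \<pi> ! i \<notin> T)}"

definition reach_prob :: "('S::finite \<Rightarrow> 'A::finite \<Rightarrow> 'S \<Rightarrow> real) \<Rightarrow> ('S \<Rightarrow> 'A) \<Rightarrow> 'S set \<Rightarrow> 'S \<Rightarrow> ennreal" where
  "reach_prob P \<sigma> T s =
     (\<Sum>n. \<Sum>\<pi>\<in>first_hit_paths T s n. ennreal (path_prob P \<sigma> \<pi>))"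

text \<open>Expected accumulated reward until reaching T, E^sigma_s(<>T): the accumulated reward
  of a path is the sum of rew(s_k) for k < n, n the first visit of T, and \<infinity> if T is never
  visited.  Its expectation splits into the (countable) sum over first-hit cylinders plus
  \<infinity> times the probability of never reaching T (with \<infinity> * 0 = 0).\<close>
definition exp_rew :: "('S::finite \<Rightarrow> 'A::finite \<Rightarrow> 'S \<Rightarrow> real) \<Rightarrow> 'S set \<Rightarrow> ('S \<Rightarrow> real)
     \<Rightarrow> ('S \<Rightarrow> 'A) \<Rightarrow> 'S \<Rightarrow> ennreal" where
  "exp_rew P T rew \<sigma> s =
     (\<Sum>n. \<Sum>\<pi>\<in>first_hit_paths T s n.
          ennreal (path_prob P \<sigma> \<pi> * (\<Sum>k<n. rew (\<pi> ! k))))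
     + (top::ennreal) * (1 - reach_prob P \<sigma> T s)"

definition exp_rew_max :: "('S::finite \<Rightarrow> 'A::finite \<Rightarrow> 'S \<Rightarrow> real) \<Rightarrow> 'S set \<Rightarrow> ('S \<Rightarrow> real)
     \<Rightarrow> 'S \<Rightarrow> ennreal" where
  "exp_rew_max P T rew s = Max {exp_rew P T rew \<sigma> s | \<sigma>. is_strategy P \<sigma>}"

definition Emax_op :: "('S::finite \<Rightarrow> 'A::finite \<Rightarrow> 'S \<Rightarrow> real) \<Rightarrow> 'S set \<Rightarrow> ('S \<Rightarrow> real)
     \<Rightarrow> ('S \<Rightarrow> ennreal) \<Rightarrow> 'S \<Rightarrow> ennreal" where
  "Emax_op P T rew x s =
     (if s \<in> T then 0
      else ennreal (rew s) +
           Max ((\<lambda>a. \<Sum>s'\<in>Post P s a. ennreal (P s a s') * x s') ` Act P s))"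

definition Dmax_op :: "('S::finite \<Rightarrow> 'A::finite \<Rightarrow> 'S \<Rightarrow> real) \<Rightarrow> 'S set
     \<Rightarrow> ('S \<Rightarrow> enat) \<Rightarrow> 'S \<Rightarrow> enat" where
  "Dmax_op P T r s =
     (if s \<in> T then 0
      else 1 + Max ((\<lambda>a. Min (r ` Post P s a)) ` Act P s))"

end

theory Submission
  imports Defs
begin

text \<open>Fix a memoryless strategy \<sigma>. Truncated at horizon N, the expected reward collected on
  paths that hit T within N steps obeys the one-step recursion of \<sigma>, which is dominated by
  E^max; as x is a prefixed point of E^max, induction on N bounds it by x.
  It remains to show that T is reached almost surely from every state s with x(s) < \<infinity>.
  These states form a set F closed under \<sigma>-successors (a successor with value \<infinity> would force
  x(s) = \<infinity>), and since D^max(r) \<le> r with r finite on F, every state of F outside T has a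
  \<sigma>-successor of strictly smaller rank r. The reachability probability is harmonic outside T,
  so its minimum over F is inherited by every successor of a minimiser; following the ranks
  downwards ends in T, where it is 1.\<close>

lemma weighted_average_eq_lower_bound:
  fixes p R :: "'a \<Rightarrow> real"
  assumes "finite A" and p_nonneg: "\<And>a. a \<in> A \<Longrightarrow> 0 \<le> p a" and p_sum: "(\<Sum>a\<in>A. p a) = 1"
    and lower: "\<And>a. a \<in> A \<Longrightarrow> 0 < p a \<Longrightarrow> \<mu> \<le> R a"
    and average: "(\<Sum>a\<in>A. p a * R a) = \<mu>"
    and "a \<in> A" "0 < p a"
  shows "R a = \<mu>"
proof -
  have terms_nonneg: "0 \<le> p b * (R b - \<mu>)" if "b \<in> A" for b
    using p_nonneg[OF that] lower[OF that] by (cases "p b = 0") auto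
  have "(\<Sum>b\<in>A. p b * (R b - \<mu>)) = (\<Sum>b\<in>A. p b * R b) - \<mu> * (\<Sum>b\<in>A. p b)"
    by (simp add: right_diff_distrib sum_subtractf sum_distrib_left mult.commute)
  also have "\<dots> = 0" using average p_sum by simp
  finally have "p a * (R a - \<mu>) = 0"
    using sum_nonneg_eq_0_iff[OF \<open>finite A\<close>, of "\<lambda>b. p b * (R b - \<mu>)"] terms_nonneg
      \<open>a \<in> A\<close> by blast
  then show ?thesis using \<open>0 < p a\<close> by simp
qed

lemma harmonic_min_principle:
  fixes p :: "'S::finite \<Rightarrow> 'S \<Rightarrow> real" and R :: "'S \<Rightarrow> real" and rank :: "'S \<Rightarrow> 'b::wellorder"
  assumes p_nonneg: "\<And>s s'. 0 \<le> p s s'" and p_stochastic: "\<And>s. (\<Sum>s'\<in>UNIV. p s s') = 1"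
    and harmonic: "\<And>s. s \<in> F \<Longrightarrow> s \<notin> T \<Longrightarrow> R s = (\<Sum>s'\<in>UNIV. p s s' * R s')"
    and boundary: "\<And>s. s \<in> F \<Longrightarrow> s \<in> T \<Longrightarrow> c \<le> R s"
    and closed: "\<And>s s'. s \<in> F \<Longrightarrow> s \<notin> T \<Longrightarrow> 0 < p s s' \<Longrightarrow> s' \<in> F"
    and descent: "\<And>s. s \<in> F \<Longrightarrow> s \<notin> T \<Longrightarrow> \<exists>s'. 0 < p s s' \<and> rank s' < rank s"
    and "s \<in> F"
  shows "c \<le> R s"
proof -
  define \<mu> where "\<mu> = Min (R ` F)"
  have min_le: "\<mu> \<le> R s'" if "s' \<in> F" for s'
    unfolding \<mu>_def using that by simp
  obtain s\<^sub>0 where "s\<^sub>0 \<in> F" "R s\<^sub>0 = \<mu>"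
    using Min_in[of "R ` F"] \<open>s \<in> F\<close> unfolding \<mu>_def by fastforce
  have min_inherited: "R s' = \<mu>" if "s \<in> F" "s \<notin> T" "R s = \<mu>" "0 < p s s'" for s s'
    using weighted_average_eq_lower_bound[of UNIV "p s" \<mu> R s'] that p_nonneg p_stochastic
      harmonic closed min_le by simp
  have "c \<le> \<mu>" if "s \<in> F" "R s = \<mu>" for s
    using that
  proof (induction "rank s" arbitrary: s rule: less_induct)
    case less
    show ?case
    proof (cases "s \<in> T")
      case True
      then show ?thesis using boundary less.prems by force
    next
      case False
      then obtain s' where "0 < p s s'" "rank s' < rank s"
        using descent less.prems by blast
      moreover have "s' \<in> F" "R s' = \<mu>"
        using closed min_inherited less.prems False \<open>0 < p s s'\<close> by blast+
      ultimately show ?thesis using less.hyps by blast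
    qed
  qed
  then have "c \<le> \<mu>" using \<open>s\<^sub>0 \<in> F\<close> \<open>R s\<^sub>0 = \<mu>\<close> .
  then show ?thesis using min_le[OF \<open>s \<in> F\<close>] by linarith
qed

lemma first_hit_paths_0: "first_hit_paths T s 0 = (if s \<in> T then {[s]} else {})"
  unfolding first_hit_paths_def by (auto simp: length_Suc_conv)

lemma first_hit_paths_Suc:
  "first_hit_paths T s (Suc n) = (if s \<in> T then {} else Cons s ` (\<Union>s'. first_hit_paths T s' n))"
proof (cases "s \<in> T")
  case True
  then show ?thesis unfolding first_hit_paths_def by auto
next
  case False
  have "\<pi> \<in> first_hit_paths T s (Suc n) \<longleftrightarrow> (\<exists>s' \<pi>'. \<pi> = s # \<pi>' \<and> \<pi>' \<in> first_hit_paths T s' n)"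
    for \<pi>
  proof
    assume "\<pi> \<in> first_hit_paths T s (Suc n)"
    then show "\<exists>s' \<pi>'. \<pi> = s # \<pi>' \<and> \<pi>' \<in> first_hit_paths T s' n"
      unfolding first_hit_paths_def by (cases \<pi>) auto
  next
    assume "\<exists>s' \<pi>'. \<pi> = s # \<pi>' \<and> \<pi>' \<in> first_hit_paths T s' n"
    then show "\<pi> \<in> first_hit_paths T s (Suc n)"
      using False unfolding first_hit_paths_def by (auto simp: less_Suc_eq_0_disj)
  qed
  then show ?thesis using False unfolding set_eq_iff image_iff by simp blast
qed

lemma finite_first_hit_paths: "finite (first_hit_paths T (s::'S::finite) n)"
proof (rule finite_subset)
  show "first_hit_paths T s n \<subseteq> {\<pi>. set \<pi> \<subseteq> UNIV \<and> length \<pi> = Suc n}"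
    unfolding first_hit_paths_def by blast
  show "finite {\<pi>. set \<pi> \<subseteq> (UNIV::'S set) \<and> length \<pi> = Suc n}"
    by (rule finite_lists_length_eq) simp
qed

lemma first_hit_paths_Cons_tl: "\<pi> \<in> first_hit_paths T s n \<Longrightarrow> \<pi> = s # tl \<pi>"
  unfolding first_hit_paths_def by (cases \<pi>) auto

lemma sum_first_hit_paths_Suc:
  fixes h :: "'S::finite list \<Rightarrow> 'b::comm_monoid_add"
  assumes "s \<notin> T"
  shows "(\<Sum>\<pi>\<in>first_hit_paths T s (Suc n). h \<pi>)
    = (\<Sum>s'\<in>UNIV. \<Sum>\<pi>\<in>first_hit_paths T s' n. h (s # \<pi>))"
proof -
  have "(\<Sum>\<pi>\<in>first_hit_paths T s (Suc n). h \<pi>) = (\<Sum>\<pi>\<in>(\<Union>s'. first_hit_paths T s' n). h (s # \<pi>))"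
    using assms by (simp add: first_hit_paths_Suc sum.reindex)
  also have "\<dots> = (\<Sum>s'\<in>UNIV. \<Sum>\<pi>\<in>first_hit_paths T s' n. h (s # \<pi>))"
  proof (rule sum.UNION_disjoint)
    show "\<forall>s'\<in>UNIV. finite (first_hit_paths T s' n)" by (simp add: finite_first_hit_paths)
  qed (auto simp: first_hit_paths_def)
  finally show ?thesis .
qed

lemma path_prob_Cons_first_hit:
  assumes "\<pi> \<in> first_hit_paths T s' n"
  shows "path_prob P \<sigma> (s # \<pi>) = P s (\<sigma> s) s' * path_prob P \<sigma> \<pi>"
  using first_hit_paths_Cons_tl[OF assms] by (metis path_prob.simps(3))

lemma is_mdp_nonneg: "is_mdp P \<Longrightarrow> 0 \<le> P s a s'"
  unfolding is_mdp_def by auto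

lemma path_prob_nonneg: "is_mdp P \<Longrightarrow> 0 \<le> path_prob P \<sigma> \<pi>"
  by (induction P \<sigma> \<pi> rule: path_prob.induct) (auto simp: is_mdp_nonneg)

lemma is_strategy_sum_eq_1: "is_strategy P \<sigma> \<Longrightarrow> (\<Sum>s'\<in>UNIV. P s (\<sigma> s) s') = 1"
  unfolding is_strategy_def Act_def by auto

lemma is_mdp_strategy_exists:
  assumes "is_mdp P"
  shows "\<exists>\<sigma>. is_strategy P \<sigma>"
proof -
  have "\<forall>s. \<exists>a. a \<in> Act P s" using assms unfolding is_mdp_def by blast
  then show ?thesis unfolding is_strategy_def by (rule choice)
qed

definition hit_prob :: "('S::finite \<Rightarrow> 'A::finite \<Rightarrow> 'S \<Rightarrow> real) \<Rightarrow> ('S \<Rightarrow> 'A) \<Rightarrow> 'S set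
    \<Rightarrow> nat \<Rightarrow> 'S \<Rightarrow> real" where
  "hit_prob P \<sigma> T n s = (\<Sum>\<pi>\<in>first_hit_paths T s n. path_prob P \<sigma> \<pi>)"

definition hit_reward :: "('S::finite \<Rightarrow> 'A::finite \<Rightarrow> 'S \<Rightarrow> real) \<Rightarrow> ('S \<Rightarrow> 'A) \<Rightarrow> 'S set
    \<Rightarrow> ('S \<Rightarrow> real) \<Rightarrow> nat \<Rightarrow> 'S \<Rightarrow> real" where
  "hit_reward P \<sigma> T rew n s =
     (\<Sum>\<pi>\<in>first_hit_paths T s n. path_prob P \<sigma> \<pi> * (\<Sum>k<n. rew (\<pi> ! k)))"

definition reach_prob_within :: "('S::finite \<Rightarrow> 'A::finite \<Rightarrow> 'S \<Rightarrow> real) \<Rightarrow> ('S \<Rightarrow> 'A)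
    \<Rightarrow> 'S set \<Rightarrow> nat \<Rightarrow> 'S \<Rightarrow> real" where
  "reach_prob_within P \<sigma> T N s = (\<Sum>n<N. hit_prob P \<sigma> T n s)"

definition reward_within :: "('S::finite \<Rightarrow> 'A::finite \<Rightarrow> 'S \<Rightarrow> real) \<Rightarrow> ('S \<Rightarrow> 'A)
    \<Rightarrow> 'S set \<Rightarrow> ('S \<Rightarrow> real) \<Rightarrow> nat \<Rightarrow> 'S \<Rightarrow> real" where
  "reward_within P \<sigma> T rew N s = (\<Sum>n<N. hit_reward P \<sigma> T rew n s)"

lemma hit_prob_nonneg: "is_mdp P \<Longrightarrow> 0 \<le> hit_prob P \<sigma> T n s"
  unfolding hit_prob_def by (intro sum_nonneg path_prob_nonneg)

lemma hit_reward_nonneg: "is_mdp P \<Longrightarrow> (\<And>s. 0 \<le> rew s) \<Longrightarrow> 0 \<le> hit_reward P \<sigma> T rew n s"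
  unfolding hit_reward_def by (intro sum_nonneg mult_nonneg_nonneg path_prob_nonneg)

lemma hit_prob_0: "hit_prob P \<sigma> T 0 s = (if s \<in> T then 1 else 0)"
  by (simp add: hit_prob_def first_hit_paths_0)

lemma hit_prob_Suc:
  "hit_prob P \<sigma> T (Suc n) s =
    (if s \<in> T then 0 else (\<Sum>s'\<in>UNIV. P s (\<sigma> s) s' * hit_prob P \<sigma> T n s'))"
proof (cases "s \<in> T")
  case True
  then show ?thesis by (simp add: hit_prob_def first_hit_paths_Suc)
next
  case False
  then show ?thesis
    unfolding hit_prob_def sum_first_hit_paths_Suc[OF False]
    by (simp add: path_prob_Cons_first_hit sum_distrib_left cong: sum.cong)
qed

lemma hit_reward_0: "hit_reward P \<sigma> T rew 0 s = 0"
  by (simp add: hit_reward_def)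

lemma hit_reward_Suc:
  "hit_reward P \<sigma> T rew (Suc n) s = (if s \<in> T then 0 else
    (\<Sum>s'\<in>UNIV. P s (\<sigma> s) s' * (rew s * hit_prob P \<sigma> T n s' + hit_reward P \<sigma> T rew n s')))"
proof (cases "s \<in> T")
  case True
  then show ?thesis by (simp add: hit_reward_def first_hit_paths_Suc)
next
  case False
  have path_term: "path_prob P \<sigma> (s # \<pi>) * (\<Sum>k<Suc n. rew ((s # \<pi>) ! k))
      = P s (\<sigma> s) s' * (rew s * path_prob P \<sigma> \<pi>) + P s (\<sigma> s) s' * (path_prob P \<sigma> \<pi> * (\<Sum>k<n. rew (\<pi> ! k)))"
    if "\<pi> \<in> first_hit_paths T s' n" for s' \<pi>
    unfolding sum.lessThan_Suc_shift path_prob_Cons_first_hit[OF that] by (simp add: algebra_simps)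
  have "hit_reward P \<sigma> T rew (Suc n) s = (\<Sum>s'\<in>UNIV. \<Sum>\<pi>\<in>first_hit_paths T s' n.
      P s (\<sigma> s) s' * (rew s * path_prob P \<sigma> \<pi>) + P s (\<sigma> s) s' * (path_prob P \<sigma> \<pi> * (\<Sum>k<n. rew (\<pi> ! k))))"
    unfolding hit_reward_def sum_first_hit_paths_Suc[OF False] by (intro sum.cong refl path_term)
  also have "\<dots> = (\<Sum>s'\<in>UNIV. P s (\<sigma> s) s' * (rew s * hit_prob P \<sigma> T n s' + hit_reward P \<sigma> T rew n s'))"
    by (simp add: hit_prob_def hit_reward_def sum.distrib sum_distrib_left distrib_left)
  finally show ?thesis using False by simp
qed

lemma reach_prob_within_Suc:
  "reach_prob_within P \<sigma> T (Suc N) s =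
    (if s \<in> T then 1 else (\<Sum>s'\<in>UNIV. P s (\<sigma> s) s' * reach_prob_within P \<sigma> T N s'))"
  unfolding reach_prob_within_def sum.lessThan_Suc_shift
  by (simp add: hit_prob_0 hit_prob_Suc sum_distrib_left sum.swap[where A="{..<N}"])

lemma reward_within_Suc:
  "reward_within P \<sigma> T rew (Suc N) s = (if s \<in> T then 0 else
    (\<Sum>s'\<in>UNIV. P s (\<sigma> s) s' * (rew s * reach_prob_within P \<sigma> T N s' + reward_within P \<sigma> T rew N s')))"
  unfolding reward_within_def reach_prob_within_def sum.lessThan_Suc_shift
  by (simp add: hit_reward_0 hit_reward_Suc sum_distrib_left distrib_left sum.distrib
      sum.swap[where A="{..<N}"])

lemma sum_Post_eq_sum_UNIV:
  "(\<Sum>s'\<in>Post P s a. ennreal (P s a s') * y s') = (\<Sum>s'\<in>UNIV. ennreal (P s a s') * y s')"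
  by (rule sum.mono_neutral_left) (auto simp: Post_def not_less ennreal_neg)

lemma enat_less_of_one_plus_le: "1 + m \<le> n \<Longrightarrow> n < \<infinity> \<Longrightarrow> m < (n::enat)"
  by (cases m; cases n) (auto simp: one_enat_def)

lemma Dmax_prefixed_rank_descent:
  assumes D: "Dmax_op P T r s \<le> r s" and "s \<notin> T" "r s < \<infinity>" "a \<in> Act P s"
  shows "\<exists>s'. 0 < P s a s' \<and> r s' < r s"
proof -
  have "Post P s a \<noteq> {}"
  proof
    assume "Post P s a = {}"
    then have "(\<Sum>s'\<in>UNIV. P s a s') \<le> 0" by (intro sum_nonpos) (auto simp: Post_def not_less)
    then show False using \<open>a \<in> Act P s\<close> by (simp add: Act_def)
  qed
  then have "Min (r ` Post P s a) \<in> r ` Post P s a" by (intro Min_in) auto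
  then obtain s' where s': "s' \<in> Post P s a" "r s' = Min (r ` Post P s a)" by (metis imageE)
  have "1 + r s' \<le> 1 + Max ((\<lambda>a. Min (r ` Post P s a)) ` Act P s)"
    using s' \<open>a \<in> Act P s\<close> by (intro add_left_mono Max_ge) auto
  also have "\<dots> \<le> r s" using D \<open>s \<notin> T\<close> by (simp add: Dmax_op_def)
  finally show ?thesis using s' \<open>r s < \<infinity>\<close> enat_less_of_one_plus_le by (auto simp: Post_def)
qed

context
  fixes P :: "'S::finite \<Rightarrow> 'A::finite \<Rightarrow> 'S \<Rightarrow> real" and \<sigma> :: "'S \<Rightarrow> 'A"
  assumes mdp: "is_mdp P" and strategy: "is_strategy P \<sigma>"
begin

lemma Emax_op_ge_strategy:
  assumes "s \<notin> T"
  shows "ennreal (rew s) + (\<Sum>s'\<in>UNIV. ennreal (P s (\<sigma> s) s') * x s') \<le> Emax_op P T rew x s"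
proof -
  have "(\<Sum>s'\<in>UNIV. ennreal (P s (\<sigma> s) s') * x s')
      \<le> Max ((\<lambda>a. \<Sum>s'\<in>Post P s a. ennreal (P s a s') * x s') ` Act P s)"
    unfolding sum_Post_eq_sum_UNIV[symmetric]
    using strategy unfolding is_strategy_def by (intro Max_ge) auto
  then show ?thesis using assms by (simp add: Emax_op_def add_left_mono)
qed

lemma Emax_prefixed_successor_finite:
  assumes E: "Emax_op P T rew x s \<le> x s" and "s \<notin> T" "x s < \<infinity>" "0 < P s (\<sigma> s) s'"
  shows "x s' < \<infinity>"
proof (rule ccontr)
  assume "\<not> x s' < \<infinity>"
  then have "x s' = \<infinity>" by (simp add: less_top[symmetric])
  then have "\<infinity> = ennreal (P s (\<sigma> s) s') * x s'"
    using \<open>0 < P s (\<sigma> s) s'\<close> by (simp add: ennreal_mult_eq_top_iff)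
  also have "\<dots> \<le> (\<Sum>s''\<in>UNIV. ennreal (P s (\<sigma> s) s'') * x s'')"
    by (rule member_le_sum) simp_all
  also have "\<dots> \<le> ennreal (rew s) + (\<Sum>s''\<in>UNIV. ennreal (P s (\<sigma> s) s'') * x s'')"
    by simp
  also have "\<dots> \<le> x s"
    using Emax_op_ge_strategy[OF \<open>s \<notin> T\<close>] E by (rule order_trans)
  finally show False using \<open>x s < \<infinity>\<close> by simp
qed

lemma reach_prob_within_le_1: "reach_prob_within P \<sigma> T N s \<le> 1"
proof (induction N arbitrary: s)
  case 0
  show ?case by (simp add: reach_prob_within_def)
next
  case (Suc N)
  have "(\<Sum>s'\<in>UNIV. P s (\<sigma> s) s' * reach_prob_within P \<sigma> T N s') \<le> (\<Sum>s'\<in>UNIV. P s (\<sigma> s) s')"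
    by (intro sum_mono mult_right_le_one_le is_mdp_nonneg[OF mdp] Suc.IH)
      (simp add: reach_prob_within_def sum_nonneg hit_prob_nonneg[OF mdp])
  then show ?case by (simp add: reach_prob_within_Suc is_strategy_sum_eq_1[OF strategy])
qed

lemma hit_prob_summable: "summable (\<lambda>n. hit_prob P \<sigma> T n s)"
  using reach_prob_within_le_1 unfolding reach_prob_within_def
  by (intro summableI_nonneg_bounded[where x=1] hit_prob_nonneg[OF mdp])

lemma reach_prob_eq_suminf: "reach_prob P \<sigma> T s = ennreal (\<Sum>n. hit_prob P \<sigma> T n s)"
proof -
  have "reach_prob P \<sigma> T s = (\<Sum>n. ennreal (hit_prob P \<sigma> T n s))"
    unfolding reach_prob_def hit_prob_def using path_prob_nonneg[OF mdp] by simp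
  also have "\<dots> = ennreal (\<Sum>n. hit_prob P \<sigma> T n s)"
    using hit_prob_nonneg[OF mdp] hit_prob_summable by (rule suminf_ennreal2)
  finally show ?thesis .
qed

lemma suminf_hit_prob_le_1: "(\<Sum>n. hit_prob P \<sigma> T n s) \<le> 1"
  using reach_prob_within_le_1 unfolding reach_prob_within_def
  by (intro suminf_le_const hit_prob_summable)

lemma suminf_hit_prob_rec:
  "(\<Sum>n. hit_prob P \<sigma> T n s) =
    (if s \<in> T then 1 else (\<Sum>s'\<in>UNIV. P s (\<sigma> s) s' * (\<Sum>n. hit_prob P \<sigma> T n s')))"
proof -
  have limit: "(\<lambda>N. reach_prob_within P \<sigma> T N s') \<longlonglongrightarrow> (\<Sum>n. hit_prob P \<sigma> T n s')" for s'
    unfolding reach_prob_within_def by (rule summable_LIMSEQ[OF hit_prob_summable])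
  have "(\<lambda>N. reach_prob_within P \<sigma> T (Suc N) s) \<longlonglongrightarrow>
      (if s \<in> T then 1 else (\<Sum>s'\<in>UNIV. P s (\<sigma> s) s' * (\<Sum>n. hit_prob P \<sigma> T n s')))"
    unfolding reach_prob_within_Suc by (simp add: tendsto_sum tendsto_mult_left limit)
  then show ?thesis using LIMSEQ_unique LIMSEQ_Suc[OF limit] by blast
qed

lemma reward_within_le_prefixed:
  assumes rew_nonneg: "\<And>s. 0 \<le> rew s" and E: "\<And>s. Emax_op P T rew x s \<le> x s"
  shows "ennreal (reward_within P \<sigma> T rew N s) \<le> x s"
proof (induction N arbitrary: s)
  case 0
  show ?case by (simp add: reward_within_def)
next
  case (Suc N)
  show ?case
  proof (cases "s \<in> T")
    case True
    then show ?thesis by (simp add: reward_within_Suc)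
  next
    case False
    let ?p = "P s (\<sigma> s)" and ?G = "reward_within P \<sigma> T rew N"
    have G_nonneg: "0 \<le> ?G s'" for s'
      unfolding reward_within_def by (intro sum_nonneg hit_reward_nonneg[OF mdp] rew_nonneg)
    have "reward_within P \<sigma> T rew (Suc N) s \<le> (\<Sum>s'\<in>UNIV. ?p s' * rew s + ?p s' * ?G s')"
      using False rew_nonneg is_mdp_nonneg[OF mdp] reach_prob_within_le_1
      by (auto simp: reward_within_Suc distrib_left intro!: sum_mono mult_left_mono mult_left_le)
    also have "\<dots> = rew s + (\<Sum>s'\<in>UNIV. ?p s' * ?G s')"
      by (simp add: sum.distrib sum_distrib_right[symmetric] is_strategy_sum_eq_1[OF strategy])
    finally have "ennreal (reward_within P \<sigma> T rew (Suc N) s)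
        \<le> ennreal (rew s + (\<Sum>s'\<in>UNIV. ?p s' * ?G s'))"
      by (rule ennreal_leI)
    also have "\<dots> = ennreal (rew s) + (\<Sum>s'\<in>UNIV. ennreal (?p s') * ennreal (?G s'))"
      using rew_nonneg G_nonneg is_mdp_nonneg[OF mdp]
      by (simp add: ennreal_plus sum_nonneg sum_ennreal[symmetric] ennreal_mult)
    also have "\<dots> \<le> ennreal (rew s) + (\<Sum>s'\<in>UNIV. ennreal (?p s') * x s')"
      by (intro add_left_mono sum_mono mult_left_mono Suc.IH) auto
    also have "\<dots> \<le> x s"
      using Emax_op_ge_strategy[OF False] E by (rule order_trans)
    finally show ?thesis .
  qed
qed

lemma reach_prob_eq_1_of_prefixed:
  assumes D: "\<And>s. Dmax_op P T r s \<le> r s" and E: "\<And>s. Emax_op P T rew x s \<le> x s"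
    and fin: "\<And>s. x s < \<infinity> \<Longrightarrow> r s < \<infinity>" and "x s < \<infinity>"
  shows "reach_prob P \<sigma> T s = 1"
proof -
  have "1 \<le> (\<Sum>n. hit_prob P \<sigma> T n s)"
  proof (rule harmonic_min_principle[where F = "{s. x s < \<infinity>}" and T = T and rank = r])
    show "\<exists>s'. 0 < P s (\<sigma> s) s' \<and> r s' < r s" if "s \<in> {s. x s < \<infinity>}" "s \<notin> T" for s
      using Dmax_prefixed_rank_descent[OF D] that fin strategy unfolding is_strategy_def by blast
  qed (use assms is_mdp_nonneg[OF mdp] is_strategy_sum_eq_1[OF strategy] suminf_hit_prob_rec
      Emax_prefixed_successor_finite[OF E] in auto)
  then have "(\<Sum>n. hit_prob P \<sigma> T n s) = 1" using suminf_hit_prob_le_1[of T s] by linarith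
  then show ?thesis by (simp add: reach_prob_eq_suminf)
qed

lemma exp_rew_le_prefixed:
  assumes rew_nonneg: "\<And>s. 0 \<le> rew s" and D: "\<And>s. Dmax_op P T r s \<le> r s"
    and E: "\<And>s. Emax_op P T rew x s \<le> x s" and fin: "\<And>s. x s < \<infinity> \<Longrightarrow> r s < \<infinity>"
  shows "exp_rew P T rew \<sigma> s \<le> x s"
proof (cases "x s < \<infinity>")
  case False
  then show ?thesis by (simp add: less_top[symmetric])
next
  case True
  have "reach_prob P \<sigma> T s = 1" using D E fin True by (rule reach_prob_eq_1_of_prefixed)
  then have "exp_rew P T rew \<sigma> s = (\<Sum>n. ennreal (hit_reward P \<sigma> T rew n s)) + 0"
    unfolding exp_rew_def hit_reward_def
    using path_prob_nonneg[OF mdp] rew_nonneg by (simp add: sum_nonneg)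
  also have "\<dots> \<le> x s"
  proof (rule ennreal_suminf_bound_add)
    show "(\<Sum>n<N. ennreal (hit_reward P \<sigma> T rew n s)) + 0 \<le> x s" for N
      using reward_within_le_prefixed[OF rew_nonneg E, of N s] hit_reward_nonneg[OF mdp rew_nonneg]
      by (simp add: reward_within_def)
  qed
  finally show ?thesis .
qed

end

lemma exp_rew_max_le:
  assumes "is_mdp P" and "\<And>\<sigma>. is_strategy P \<sigma> \<Longrightarrow> exp_rew P T rew \<sigma> s \<le> y"
  shows "exp_rew_max P T rew s \<le> y"
  unfolding exp_rew_max_def
proof (rule Max.boundedI)
  show "finite {exp_rew P T rew \<sigma> s | \<sigma>. is_strategy P \<sigma>}"
    by (rule finite_image_set) simp
  show "{exp_rew P T rew \<sigma> s | \<sigma>. is_strategy P \<sigma>} \<noteq> {}"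
    using is_mdp_strategy_exists[OF assms(1)] by blast
qed (use assms(2) in blast)

theorem proposition8:
  fixes P :: "'S::finite \<Rightarrow> 'A::finite \<Rightarrow> 'S \<Rightarrow> real"
    and T :: "'S set"
    and rew :: "'S \<Rightarrow> real"
    and x :: "'S \<Rightarrow> ennreal"
    and r :: "'S \<Rightarrow> enat"
  assumes mdp: "is_mdp P"
    and rew_nonneg: "\<forall>s. 0 \<le> rew s"
    and D: "\<forall>s. Dmax_op P T r s \<le> r s"
    and E: "\<forall>s. Emax_op P T rew x s \<le> x s"
    and fin: "\<forall>s. x s < \<infinity> \<longrightarrow> r s < \<infinity>"
  shows "\<forall>s. exp_rew_max P T rew s \<le> x s"
  using exp_rew_max_le[OF mdp] exp_rew_le_prefixed[OF mdp _ rew_nonneg[rule_format] D[rule_format]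
      E[rule_format] fin[rule_format]]
  by blast

end
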